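(* In the misspecified setting described in the context (in particular $\rho(A)<1$), the matrix $M=\bar{\mathbb{E}}[y_{t+1}y_t^\top]\,\Sigma_y^{-1}$ (the limit of the single-step least-squares estimate $\hat G_y$, equal to $CA\Sigma_xC^\top\Sigma_y^{-1}$) satisfies $\rho(M)\le 1$.
   Context: Let $A\in\mathbb{R}^{d_x\times d_x}$, $B_w\in\mathbb{R}^{d_x\times d_x}$, $C\in\mathbb{R}^{d_y\times d_x}$, $D_v\in\mathbb{R}^{d_y\times d_y}$ with spectral radius $\rho(A)<1$ and $D_vD_v^\top\succ0$. System: $x_{t+1}=Ax_t+B_ww_t$, $y_t=Cx_t+D_vv_t$, $w_t\sim\mathcal N(0,I_{d_x})$, $v_t\sim\mathcal N(0,I_{d_y})$ i.i.d. and independent, considered in steady state. $\Sigma_x$ and $\Sigma_y$ are the stationary covariances of $x_t$ and $y_t$ ($\Sigma_y\succ0$); $\bar{\mathbb{E}}[f(t)]=\lim_{T\to\infty}\mathbb{E}\frac1T\sum_{t=0}^Tf(t)$; $\rho(\cdot)$ is the spectral radius. *)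

theory Defs
  imports "Jordan_Normal_Form.Spectral_Radius"
begin

definition rho :: "real mat \<Rightarrow> real" where
  "rho A = spectral_radius (map_mat complex_of_real A)"

definition pos_def :: "real mat \<Rightarrow> bool" where
  "pos_def P \<longleftrightarrow> P\<^sup>T = P \<and>
     (\<forall>v \<in> carrier_vec (dim_row P). v \<noteq> 0\<^sub>v (dim_row P) \<longrightarrow> v \<bullet> (P *\<^sub>v v) > 0)"

end

(* Write K = C A Sx C^T, so that M = K Sy^-1, and an eigenvector v of M for the eigenvalue
   lambda gives w = Sy^-1 v with K w = lambda Sy w.  Since rho(A) < 1, iterating the Lyapunov
   equation Sx = A Sx A^T + Bw Bw^T shows that Sx is symmetric positive semidefinite.  For
   z = C^T w and p = A^T z one has w^* K w = p^* Sx z, while the Lyapunov equation and the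
   definition of Sy give w^* Sy w >= z^* Sx z >= p^* Sx p.  The Cauchy-Schwarz inequality for
   the semi-inner product of Sx thus yields |lambda| s <= s with s = w^* Sy w > 0.  Complex
   vectors are represented by the pair of their real and imaginary parts. *)

theory Submission
  imports Defs
begin

lemma pow_mat_smult:
  fixes A :: "'a :: comm_ring_1 mat"
  assumes A: "A \<in> carrier_mat n n"
  shows "(a \<cdot>\<^sub>m A) ^\<^sub>m k = (a ^ k) \<cdot>\<^sub>m (A ^\<^sub>m k)"
proof (induction k)
  case (Suc k)
  then show ?case
    using A by (simp add: mult_smult_distrib[of _ n n _ n] mult_smult_assoc_mat[of _ n n _ n])
      (auto intro!: eq_matI)
qed (use A in \<open>auto intro!: eq_matI\<close>)

lemma smult_mat_mult_vec:
  fixes A :: "'a :: comm_ring_1 mat"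
  assumes "A \<in> carrier_mat n m" and "v \<in> carrier_vec m"
  shows "(a \<cdot>\<^sub>m A) *\<^sub>v v = a \<cdot>\<^sub>v (A *\<^sub>v v)"
  using assms by (auto intro!: eq_vecI simp: scalar_prod_def sum_distrib_left ac_simps)

lemma eigenvalue_smult_mat:
  fixes A :: "'a :: field mat"
  assumes A: "A \<in> carrier_mat n n" and "eigenvalue A l"
  shows "eigenvalue (a \<cdot>\<^sub>m A) (a * l)"
proof -
  obtain v where v: "v \<in> carrier_vec n" "v \<noteq> 0\<^sub>v n" "A *\<^sub>v v = l \<cdot>\<^sub>v v"
    using assms unfolding eigenvalue_def eigenvector_def by auto
  then have "(a \<cdot>\<^sub>m A) *\<^sub>v v = (a * l) \<cdot>\<^sub>v v"
    using A by (simp add: smult_mat_mult_vec smult_smult_assoc)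
  then show ?thesis
    using v A unfolding eigenvalue_def eigenvector_def by (intro exI[of _ v]) auto
qed

lemma spectral_radius_nonneg:
  assumes "A \<in> carrier_mat n n" and "0 < n"
  shows "0 \<le> spectral_radius A"
  using spectral_radius_mem_max(1)[OF assms] by auto

lemma spectral_radius_smult_lt_1:
  assumes A: "A \<in> carrier_mat n n" and n: "0 < n" and r: "0 < r" "spectral_radius A < r"
  shows "spectral_radius (complex_of_real (1 / r) \<cdot>\<^sub>m A) < 1"
proof -
  let ?B = "complex_of_real (1 / r) \<cdot>\<^sub>m A"
  have B: "?B \<in> carrier_mat n n" using A by simp
  have "norm \<mu> < 1" if "\<mu> \<in> spectrum ?B" for \<mu>
  proof -
    have "eigenvalue (complex_of_real r \<cdot>\<^sub>m ?B) (complex_of_real r * \<mu>)"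
      using eigenvalue_smult_mat[OF B] that unfolding spectrum_def by simp
    moreover have "complex_of_real r \<cdot>\<^sub>m ?B = A"
      using r(1) by (auto intro!: eq_matI)
    ultimately have "norm (complex_of_real r * \<mu>) \<le> spectral_radius A"
      using spectral_radius_mem_max(2)[OF A n] unfolding spectrum_def by auto
    then have "r * norm \<mu> < r * 1"
      using r by (simp only: norm_mult norm_of_real abs_of_pos)
    then show ?thesis using r(1) by (simp only: mult_less_cancel_left_pos)
  qed
  then show ?thesis
    using spectral_radius_mem_max(1)[OF B n] by auto
qed

lemma spectral_radius_lt_1_pow_tendsto_0:
  assumes A: "A \<in> carrier_mat n n" and rho: "spectral_radius A < 1" and ij: "i < n" "j < n"
  shows "(\<lambda>k. (A ^\<^sub>m k) $$ (i, j)) \<longlonglongrightarrow> 0"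
proof -
  have n: "0 < n" using ij by simp
  define r where "r = (spectral_radius A + 1) / 2"
  have r: "0 < r" "r < 1" "spectral_radius A < r"
    using rho spectral_radius_nonneg[OF A n] unfolding r_def by auto
  let ?B = "complex_of_real (1 / r) \<cdot>\<^sub>m A"
  \<comment> \<open>The powers of the rescaled matrix are bounded, so those of A decay like r ^ k.\<close>
  obtain c where c: "\<And>k. norm_bound (?B ^\<^sub>m k) c"
    using spectral_radius_jnf_norm_bound_less_1_upper_triangular spectral_radius_smult_lt_1[OF A n r(1,3)] A
    by (metis smult_carrier_mat)
  have bound: "norm ((A ^\<^sub>m k) $$ (i, j)) \<le> norm (r ^ k) * c" for k
  proof -
    have "norm ((?B ^\<^sub>m k) $$ (i, j)) \<le> c" using c[of k] A ij unfolding norm_bound_def by auto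
    then have "(1 / r) ^ k * norm ((A ^\<^sub>m k) $$ (i, j)) \<le> c"
      using A ij r(1) by (simp add: pow_mat_smult norm_mult norm_power norm_divide)
    then have "r ^ k * ((1 / r) ^ k * norm ((A ^\<^sub>m k) $$ (i, j))) \<le> r ^ k * c"
      using r(1) by (simp add: mult_left_mono)
    then show ?thesis
      using r(1) by (simp add: power_one_over)
  qed
  have "(\<lambda>k. r ^ k) \<longlonglongrightarrow> 0"
    using r by (intro LIMSEQ_power_zero) auto
  then show ?thesis
    by (rule tendsto_0_le) (use bound in \<open>blast intro: always_eventually\<close>)
qed

lemma rho_lt_1_pow_tendsto_0:
  fixes A :: "real mat"
  assumes A: "A \<in> carrier_mat n n" and "rho A < 1" and ij: "i < n" "j < n"
  shows "(\<lambda>k. (A ^\<^sub>m k) $$ (i, j)) \<longlonglongrightarrow> 0"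
proof -
  have "map_mat complex_of_real A ^\<^sub>m k = map_mat complex_of_real (A ^\<^sub>m k)" for k
    by (rule of_real_hom.mat_hom_pow[OF A, symmetric])
  then have "(\<lambda>k. complex_of_real ((A ^\<^sub>m k) $$ (i, j))) \<longlonglongrightarrow> 0"
    using spectral_radius_lt_1_pow_tendsto_0[of "map_mat complex_of_real A" n i j] assms
    unfolding rho_def by simp
  then show ?thesis by (metis of_real_0 tendsto_of_real_iff)
qed

lemma mult_mat_vec_tendsto_0:
  fixes M :: "nat \<Rightarrow> real mat"
  assumes M: "\<And>k. M k \<in> carrier_mat n m" and u: "u \<in> carrier_vec m"
    and lim: "\<And>i j. i < n \<Longrightarrow> j < m \<Longrightarrow> (\<lambda>k. M k $$ (i, j)) \<longlonglongrightarrow> 0"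
    and i: "i < n"
  shows "(\<lambda>k. (M k *\<^sub>v u) $ i) \<longlonglongrightarrow> 0"
proof -
  have "(\<lambda>k. \<Sum>j<m. M k $$ (i, j) * u $ j) \<longlonglongrightarrow> 0"
    using lim[OF i] by (intro tendsto_null_sum tendsto_mult_left_zero) auto
  moreover have "(M k *\<^sub>v u) $ i = (\<Sum>j<m. M k $$ (i, j) * u $ j)" for k
    using M[of k] u i by (auto simp: scalar_prod_def lessThan_atLeast0)
  ultimately show ?thesis by simp
qed

lemma scalar_prod_mult_mat_vec_tendsto_0:
  fixes x y :: "nat \<Rightarrow> real vec"
  assumes X: "X \<in> carrier_mat n n"
    and x: "\<And>k. x k \<in> carrier_vec n" and y: "\<And>k. y k \<in> carrier_vec n"
    and x0: "\<And>i. i < n \<Longrightarrow> (\<lambda>k. x k $ i) \<longlonglongrightarrow> 0"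
    and y0: "\<And>j. j < n \<Longrightarrow> (\<lambda>k. y k $ j) \<longlonglongrightarrow> 0"
  shows "(\<lambda>k. x k \<bullet> (X *\<^sub>v y k)) \<longlonglongrightarrow> 0"
proof -
  have "(\<lambda>k. \<Sum>i<n. x k $ i * (\<Sum>j<n. X $$ (i, j) * y k $ j)) \<longlonglongrightarrow> 0"
    using x0 y0 by (intro tendsto_null_sum tendsto_mult_zero tendsto_mult_right_zero) auto
  moreover have "x k \<bullet> (X *\<^sub>v y k) = (\<Sum>i<n. x k $ i * (\<Sum>j<n. X $$ (i, j) * y k $ j))" for k
    using X x[of k] y[of k] by (auto simp: scalar_prod_def lessThan_atLeast0 intro!: sum.cong)
  ultimately show ?thesis by simp
qed

lemma scalar_prod_self_nonneg:
  fixes v :: "real vec"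
  shows "0 \<le> v \<bullet> v"
  unfolding scalar_prod_def by (intro sum_nonneg) simp

lemma lyapunov_form_step:
  fixes A S B :: "real mat"
  assumes A: "A \<in> carrier_mat n n" and S: "S \<in> carrier_mat n n" and B: "B \<in> carrier_mat n m"
    and lyap: "S = A * S * A\<^sup>T + B * B\<^sup>T"
    and x: "x \<in> carrier_vec n" and y: "y \<in> carrier_vec n"
  shows "x \<bullet> (S *\<^sub>v y) = (A\<^sup>T *\<^sub>v x) \<bullet> (S *\<^sub>v (A\<^sup>T *\<^sub>v y)) + (B\<^sup>T *\<^sub>v x) \<bullet> (B\<^sup>T *\<^sub>v y)"
proof -
  have "S *\<^sub>v y = A *\<^sub>v (S *\<^sub>v (A\<^sup>T *\<^sub>v y)) + B *\<^sub>v (B\<^sup>T *\<^sub>v y)"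
    using A S B y by (subst lyap) (simp add: add_mult_distrib_mat_vec[of _ n n] assoc_mult_mat_vec[of _ n n _ n])
  then have "x \<bullet> (S *\<^sub>v y) = x \<bullet> (A *\<^sub>v (S *\<^sub>v (A\<^sup>T *\<^sub>v y))) + x \<bullet> (B *\<^sub>v (B\<^sup>T *\<^sub>v y))"
    using A S B x y by (simp add: scalar_prod_add_distrib[of _ n])
  then show ?thesis
    using A S B x y
    by (simp add: transpose_vec_mult_scalar[of A n n, symmetric] transpose_vec_mult_scalar[of B n m, symmetric])
qed

lemma lyapunov_form_iterate:
  fixes A S B :: "real mat"
  assumes A: "A \<in> carrier_mat n n" and S: "S \<in> carrier_mat n n" and B: "B \<in> carrier_mat n m"
    and lyap: "S = A * S * A\<^sup>T + B * B\<^sup>T"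
    and x: "x \<in> carrier_vec n" and y: "y \<in> carrier_vec n"
  shows "x \<bullet> (S *\<^sub>v y) = ((A ^\<^sub>m k)\<^sup>T *\<^sub>v x) \<bullet> (S *\<^sub>v ((A ^\<^sub>m k)\<^sup>T *\<^sub>v y))
    + (\<Sum>j<k. (B\<^sup>T *\<^sub>v ((A ^\<^sub>m j)\<^sup>T *\<^sub>v x)) \<bullet> (B\<^sup>T *\<^sub>v ((A ^\<^sub>m j)\<^sup>T *\<^sub>v y)))"
proof (induction k)
  case (Suc k)
  have pow: "(A ^\<^sub>m Suc k)\<^sup>T *\<^sub>v v = A\<^sup>T *\<^sub>v ((A ^\<^sub>m k)\<^sup>T *\<^sub>v v)" if "v \<in> carrier_vec n" for v
    using A that by (simp add: transpose_mult[of _ n n _ n] assoc_mult_mat_vec[of _ n n _ n])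
  have "(A ^\<^sub>m k)\<^sup>T *\<^sub>v x \<in> carrier_vec n" "(A ^\<^sub>m k)\<^sup>T *\<^sub>v y \<in> carrier_vec n"
    using A x y by (auto intro!: mult_mat_vec_carrier[of _ n n])
  from lyapunov_form_step[OF A S B lyap this] show ?case
    unfolding pow[OF x] pow[OF y] by (simp add: Suc)
qed (use A x y in simp)

lemma stable_pow_form_tendsto_0:
  fixes A S :: "real mat"
  assumes A: "A \<in> carrier_mat n n" and S: "S \<in> carrier_mat n n"
    and stable: "\<And>i j. i < n \<Longrightarrow> j < n \<Longrightarrow> (\<lambda>k. (A ^\<^sub>m k) $$ (i, j)) \<longlonglongrightarrow> 0"
    and x: "x \<in> carrier_vec n" and y: "y \<in> carrier_vec n"
  shows "(\<lambda>k. ((A ^\<^sub>m k)\<^sup>T *\<^sub>v x) \<bullet> (S *\<^sub>v ((A ^\<^sub>m k)\<^sup>T *\<^sub>v y))) \<longlonglongrightarrow> 0"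
proof -
  have AkT: "(A ^\<^sub>m k)\<^sup>T \<in> carrier_mat n n" for k using A by simp
  have "(\<lambda>k. (A ^\<^sub>m k)\<^sup>T $$ (i, j)) \<longlonglongrightarrow> 0" if "i < n" "j < n" for i j
    using stable[OF that(2,1)] that A by simp
  then have AkT_v: "(\<lambda>k. ((A ^\<^sub>m k)\<^sup>T *\<^sub>v v) $ i) \<longlonglongrightarrow> 0" if "v \<in> carrier_vec n" "i < n" for v i
    by (rule mult_mat_vec_tendsto_0[OF AkT that(1) _ that(2)])
  show ?thesis
    by (rule scalar_prod_mult_mat_vec_tendsto_0[OF S mult_mat_vec_carrier[OF AkT x]
          mult_mat_vec_carrier[OF AkT y] AkT_v[OF x] AkT_v[OF y]])
qed

lemma lyapunov_solution_symmetric: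
  fixes A S B :: "real mat"
  assumes A: "A \<in> carrier_mat n n" and S: "S \<in> carrier_mat n n" and B: "B \<in> carrier_mat n m"
    and stable: "\<And>i j. i < n \<Longrightarrow> j < n \<Longrightarrow> (\<lambda>k. (A ^\<^sub>m k) $$ (i, j)) \<longlonglongrightarrow> 0"
    and lyap: "S = A * S * A\<^sup>T + B * B\<^sup>T"
  shows "S\<^sup>T = S"
proof -
  let ?T = "\<lambda>x y k. ((A ^\<^sub>m k)\<^sup>T *\<^sub>v x) \<bullet> (S *\<^sub>v ((A ^\<^sub>m k)\<^sup>T *\<^sub>v y))"
  have form_sym: "x \<bullet> (S *\<^sub>v y) = y \<bullet> (S *\<^sub>v x)" if x: "x \<in> carrier_vec n" and y: "y \<in> carrier_vec n" for x y
  proof -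
    let ?G = "\<lambda>x y j. (B\<^sup>T *\<^sub>v ((A ^\<^sub>m j)\<^sup>T *\<^sub>v x)) \<bullet> (B\<^sup>T *\<^sub>v ((A ^\<^sub>m j)\<^sup>T *\<^sub>v y))"
    have G_comm: "?G x y j = ?G y x j" for j
    proof (rule comm_scalar_prod)
      have "B\<^sup>T \<in> carrier_mat m n" "(A ^\<^sub>m j)\<^sup>T \<in> carrier_mat n n" using A B by auto
      then show "B\<^sup>T *\<^sub>v ((A ^\<^sub>m j)\<^sup>T *\<^sub>v x) \<in> carrier_vec m" "B\<^sup>T *\<^sub>v ((A ^\<^sub>m j)\<^sup>T *\<^sub>v y) \<in> carrier_vec m"
        using x y by (meson mult_mat_vec_carrier)+
    qed
    have G_sum: "(\<Sum>j<k. ?G x y j) = (\<Sum>j<k. ?G y x j)" for k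
      by (intro sum.cong refl) (rule G_comm)
    have "x \<bullet> (S *\<^sub>v y) - y \<bullet> (S *\<^sub>v x) = ?T x y k - ?T y x k" for k
      using G_sum[of k] lyapunov_form_iterate[OF A S B lyap x y, of k] lyapunov_form_iterate[OF A S B lyap y x, of k]
      by linarith
    moreover have "(\<lambda>k. ?T x y k - ?T y x k) \<longlonglongrightarrow> 0 - 0"
      by (intro tendsto_diff stable_pow_form_tendsto_0[OF A S stable] x y)
    ultimately have "(\<lambda>k. x \<bullet> (S *\<^sub>v y) - y \<bullet> (S *\<^sub>v x)) \<longlonglongrightarrow> 0"
      by simp
    then show ?thesis
      using LIMSEQ_unique[OF tendsto_const] by fastforce
  qed
  show ?thesis
  proof (rule eq_matI)
    fix i j assume "i < dim_row S" "j < dim_col S"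
    then show "S\<^sup>T $$ (i, j) = S $$ (i, j)"
      using form_sym[of "unit_vec n i" "unit_vec n j"] S by simp
  qed (use S in simp_all)
qed

lemma lyapunov_solution_psd:
  fixes A S B :: "real mat"
  assumes A: "A \<in> carrier_mat n n" and S: "S \<in> carrier_mat n n" and B: "B \<in> carrier_mat n m"
    and stable: "\<And>i j. i < n \<Longrightarrow> j < n \<Longrightarrow> (\<lambda>k. (A ^\<^sub>m k) $$ (i, j)) \<longlonglongrightarrow> 0"
    and lyap: "S = A * S * A\<^sup>T + B * B\<^sup>T"
    and x: "x \<in> carrier_vec n"
  shows "0 \<le> x \<bullet> (S *\<^sub>v x)"
proof -
  define T where "T k = ((A ^\<^sub>m k)\<^sup>T *\<^sub>v x) \<bullet> (S *\<^sub>v ((A ^\<^sub>m k)\<^sup>T *\<^sub>v x))" for k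
  have "T k \<le> x \<bullet> (S *\<^sub>v x)" for k
  proof -
    have "0 \<le> (\<Sum>j<k. (B\<^sup>T *\<^sub>v ((A ^\<^sub>m j)\<^sup>T *\<^sub>v x)) \<bullet> (B\<^sup>T *\<^sub>v ((A ^\<^sub>m j)\<^sup>T *\<^sub>v x)))"
      by (intro sum_nonneg scalar_prod_self_nonneg)
    then show ?thesis
      unfolding T_def using lyapunov_form_iterate[OF A S B lyap x x, of k] by linarith
  qed
  moreover have "T \<longlonglongrightarrow> 0"
    unfolding T_def by (rule stable_pow_form_tendsto_0[OF A S stable x x])
  ultimately show ?thesis
    using LIMSEQ_le_const2 by blast
qed

lemma sym_form_commute:
  fixes S :: "'a :: comm_semiring_0 mat"
  assumes S: "S \<in> carrier_mat n n" "S\<^sup>T = S" and x: "x \<in> carrier_vec n" and y: "y \<in> carrier_vec n"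
  shows "x \<bullet> (S *\<^sub>v y) = y \<bullet> (S *\<^sub>v x)"
  using transpose_vec_mult_scalar[OF S(1) y x] comm_scalar_prod[OF mult_mat_vec_carrier[OF S(1) x] y] S(2)
  by simp

lemma form_lincomb_right:
  fixes S :: "real mat"
  assumes S: "S \<in> carrier_mat n n" and x: "x \<in> carrier_vec n" and y: "y \<in> carrier_vec n"
    and z: "z \<in> carrier_vec n"
  shows "x \<bullet> (S *\<^sub>v (a \<cdot>\<^sub>v y + b \<cdot>\<^sub>v z)) = a * (x \<bullet> (S *\<^sub>v y)) + b * (x \<bullet> (S *\<^sub>v z))"
  using S x y z by (simp add: mult_add_distrib_mat_vec[of _ n n] mult_mat_vec[of _ n n] scalar_prod_add_distrib[of _ n])

lemma form_lincomb_left: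
  fixes S :: "real mat"
  assumes S: "S \<in> carrier_mat n n" and x: "x \<in> carrier_vec n" and y: "y \<in> carrier_vec n"
    and z: "z \<in> carrier_vec n"
  shows "(a \<cdot>\<^sub>v y + b \<cdot>\<^sub>v z) \<bullet> (S *\<^sub>v x) = a * (y \<bullet> (S *\<^sub>v x)) + b * (z \<bullet> (S *\<^sub>v x))"
  using S x y z by (simp add: add_scalar_prod_distrib[of _ n])

lemma sym_form_lincomb_self:
  fixes S :: "real mat"
  assumes S: "S \<in> carrier_mat n n" "S\<^sup>T = S" and y: "y \<in> carrier_vec n" and z: "z \<in> carrier_vec n"
  shows "(a \<cdot>\<^sub>v y + b \<cdot>\<^sub>v z) \<bullet> (S *\<^sub>v (a \<cdot>\<^sub>v y + b \<cdot>\<^sub>v z))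
    = a\<^sup>2 * (y \<bullet> (S *\<^sub>v y)) + 2 * a * b * (y \<bullet> (S *\<^sub>v z)) + b\<^sup>2 * (z \<bullet> (S *\<^sub>v z))"
  using y z
  by (simp add: form_lincomb_left[OF S(1)] form_lincomb_right[OF S(1)] sym_form_commute[OF S, of z y]
      algebra_simps power2_eq_square)

lemma nonneg_quadratic_discriminant:
  fixes P L Z :: real
  assumes nonneg: "\<And>t. 0 \<le> P - 2 * t * L + t\<^sup>2 * L * Z" and "0 \<le> L" and "0 \<le> Z"
  shows "L \<le> P * Z"
proof (cases "Z = 0")
  case True
  show ?thesis
  proof (rule ccontr)
    assume "\<not> L \<le> P * Z"
    then have "0 < L" using True by simp
    then show False using nonneg[of "(P + 1) / (2 * L)"] True by (simp add: field_simps)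
  qed
next
  case False
  then have "0 < Z" using \<open>0 \<le> Z\<close> by simp
  then show ?thesis using nonneg[of "1 / Z"] by (simp add: field_simps power2_eq_square)
qed

(* |<p, z>|^2 <= <p, p> <z, z> for the Hermitian extension of S,
   with p = p1 + i p2 and z = z1 + i z2. *)
lemma sym_psd_form_cauchy_schwarz_pair:
  fixes S :: "real mat"
  assumes S: "S \<in> carrier_mat n n" "S\<^sup>T = S"
    and psd: "\<And>v. v \<in> carrier_vec n \<Longrightarrow> 0 \<le> v \<bullet> (S *\<^sub>v v)"
    and p: "p1 \<in> carrier_vec n" "p2 \<in> carrier_vec n" and z: "z1 \<in> carrier_vec n" "z2 \<in> carrier_vec n"
  shows "(p1 \<bullet> (S *\<^sub>v z1) + p2 \<bullet> (S *\<^sub>v z2))\<^sup>2 + (p1 \<bullet> (S *\<^sub>v z2) - p2 \<bullet> (S *\<^sub>v z1))\<^sup>2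
    \<le> (p1 \<bullet> (S *\<^sub>v p1) + p2 \<bullet> (S *\<^sub>v p2)) * (z1 \<bullet> (S *\<^sub>v z1) + z2 \<bullet> (S *\<^sub>v z2))"
proof -
  define f where "f x y = x \<bullet> (S *\<^sub>v y)" for x y
  define R where "R = f p1 z1 + f p2 z2"
  define I where "I = f p1 z2 - f p2 z1"
  define L where "L = R\<^sup>2 + I\<^sup>2"
  define P where "P = f p1 p1 + f p2 p2"
  define Z where "Z = f z1 z1 + f z2 z2"
  \<comment> \<open>y = y1 + i y2 is z multiplied by the conjugate of <p, z> = R + i I.\<close>
  define y1 where "y1 = R \<cdot>\<^sub>v z1 + I \<cdot>\<^sub>v z2"
  define y2 where "y2 = (- I) \<cdot>\<^sub>v z1 + R \<cdot>\<^sub>v z2"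
  have y: "y1 \<in> carrier_vec n" "y2 \<in> carrier_vec n" unfolding y1_def y2_def using z by auto
  have py: "f p1 y1 + f p2 y2 = L"
    unfolding f_def y1_def y2_def L_def
    using form_lincomb_right[OF S(1) p(1) z] form_lincomb_right[OF S(1) p(2) z]
    by (simp add: R_def I_def f_def algebra_simps power2_eq_square)
  have yy: "f y1 y1 + f y2 y2 = L * Z"
    unfolding f_def y1_def y2_def L_def Z_def
    using sym_form_lincomb_self[OF S z] by (simp add: algebra_simps power2_eq_square)
  have "0 \<le> P - 2 * t * L + t\<^sup>2 * L * Z" for t
  proof -
    have "0 \<le> f (1 \<cdot>\<^sub>v p1 + (- t) \<cdot>\<^sub>v y1) (1 \<cdot>\<^sub>v p1 + (- t) \<cdot>\<^sub>v y1)
        + f (1 \<cdot>\<^sub>v p2 + (- t) \<cdot>\<^sub>v y2) (1 \<cdot>\<^sub>v p2 + (- t) \<cdot>\<^sub>v y2)"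
      unfolding f_def using p y by (intro add_nonneg_nonneg psd) auto
    also have "\<dots> = P - 2 * t * (f p1 y1 + f p2 y2) + t\<^sup>2 * (f y1 y1 + f y2 y2)"
      unfolding f_def P_def sym_form_lincomb_self[OF S p(1) y(1)] sym_form_lincomb_self[OF S p(2) y(2)]
      by (simp add: algebra_simps)
    finally show ?thesis unfolding py yy by (simp add: algebra_simps)
  qed
  moreover have "0 \<le> Z" unfolding Z_def f_def using psd z by (simp add: add_nonneg_nonneg)
  ultimately have "L \<le> P * Z"
    by (intro nonneg_quadratic_discriminant) (auto simp: L_def)
  then show ?thesis unfolding L_def R_def I_def P_def Z_def f_def .
qed

lemma quadratic_form_gram:
  fixes B :: "'a :: comm_semiring_0 mat"
  assumes B: "B \<in> carrier_mat n m" and x: "x \<in> carrier_vec n" and y: "y \<in> carrier_vec n"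
  shows "x \<bullet> ((B * B\<^sup>T) *\<^sub>v y) = (B\<^sup>T *\<^sub>v x) \<bullet> (B\<^sup>T *\<^sub>v y)"
  using B x y by (simp add: transpose_vec_mult_scalar[of B n m])

lemma congruence_form:
  fixes X C :: "'a :: comm_semiring_0 mat"
  assumes X: "X \<in> carrier_mat n n" and C: "C \<in> carrier_mat p n"
    and x: "x \<in> carrier_vec p" and y: "y \<in> carrier_vec p"
  shows "x \<bullet> ((C * X * C\<^sup>T) *\<^sub>v y) = (C\<^sup>T *\<^sub>v x) \<bullet> (X *\<^sub>v (C\<^sup>T *\<^sub>v y))"
  using X C x y
  by (simp add: assoc_mult_mat_vec[of _ p n _ p] assoc_mult_mat_vec[of _ n n _ p]
      transpose_vec_mult_scalar[of C p n, symmetric])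

lemma congruence_gram_form:
  fixes X C D :: "real mat"
  assumes X: "X \<in> carrier_mat n n" and C: "C \<in> carrier_mat p n" and D: "D \<in> carrier_mat p q"
    and x: "x \<in> carrier_vec p" and y: "y \<in> carrier_vec p"
  shows "x \<bullet> ((C * X * C\<^sup>T + D * D\<^sup>T) *\<^sub>v y) = (C\<^sup>T *\<^sub>v x) \<bullet> (X *\<^sub>v (C\<^sup>T *\<^sub>v y)) + (D\<^sup>T *\<^sub>v x) \<bullet> (D\<^sup>T *\<^sub>v y)"
proof -
  have "C * X * C\<^sup>T \<in> carrier_mat p p" "D * D\<^sup>T \<in> carrier_mat p p" using C X D by auto
  then have "x \<bullet> ((C * X * C\<^sup>T + D * D\<^sup>T) *\<^sub>v y) = x \<bullet> ((C * X * C\<^sup>T) *\<^sub>v y) + x \<bullet> ((D * D\<^sup>T) *\<^sub>v y)"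
    using x y by (simp add: add_mult_distrib_mat_vec[of _ p p] scalar_prod_add_distrib[of _ p] del: assoc_mult_mat_vec)
  then show ?thesis
    unfolding congruence_form[OF X C x y] quadratic_form_gram[OF D x y] .
qed

lemma congruence_form_mult:
  fixes A X C :: "real mat"
  assumes A: "A \<in> carrier_mat n n" and X: "X \<in> carrier_mat n n" and C: "C \<in> carrier_mat p n"
    and x: "x \<in> carrier_vec p" and y: "y \<in> carrier_vec p"
  shows "x \<bullet> ((C * A * X * C\<^sup>T) *\<^sub>v y) = (A\<^sup>T *\<^sub>v (C\<^sup>T *\<^sub>v x)) \<bullet> (X *\<^sub>v (C\<^sup>T *\<^sub>v y))"
proof -
  have "C * A * X * C\<^sup>T = C * (A * X) * C\<^sup>T" using C A X by (simp add: assoc_mult_mat[of _ p n _ n])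
  then have "x \<bullet> ((C * A * X * C\<^sup>T) *\<^sub>v y) = (C\<^sup>T *\<^sub>v x) \<bullet> (A *\<^sub>v (X *\<^sub>v (C\<^sup>T *\<^sub>v y)))"
    using congruence_form[of "A * X" n C p x y] x y A X C by (simp add: assoc_mult_mat_vec[of _ n n _ n])
  also have "\<dots> = (A\<^sup>T *\<^sub>v (C\<^sup>T *\<^sub>v x)) \<bullet> (X *\<^sub>v (C\<^sup>T *\<^sub>v y))"
    using x y A X C by (intro transpose_vec_mult_scalar[of A n n, symmetric]) auto
  finally show ?thesis .
qed

(* Real and imaginary part of w^* K w = lambda w^* S w, for K w = lambda S w with w = a + i b
   and lambda = alpha + i beta. *)
lemma sym_form_generalized_eigenpair:
  fixes K S :: "real mat"
  assumes K: "K \<in> carrier_mat p p" and S: "S \<in> carrier_mat p p" "S\<^sup>T = S"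
    and a: "a \<in> carrier_vec p" and b: "b \<in> carrier_vec p"
    and Ka: "K *\<^sub>v a = \<alpha> \<cdot>\<^sub>v (S *\<^sub>v a) + (- \<beta>) \<cdot>\<^sub>v (S *\<^sub>v b)"
    and Kb: "K *\<^sub>v b = \<beta> \<cdot>\<^sub>v (S *\<^sub>v a) + \<alpha> \<cdot>\<^sub>v (S *\<^sub>v b)"
  shows "a \<bullet> (K *\<^sub>v a) + b \<bullet> (K *\<^sub>v b) = \<alpha> * (a \<bullet> (S *\<^sub>v a) + b \<bullet> (S *\<^sub>v b))"
    and "a \<bullet> (K *\<^sub>v b) - b \<bullet> (K *\<^sub>v a) = \<beta> * (a \<bullet> (S *\<^sub>v a) + b \<bullet> (S *\<^sub>v b))"
proof -
  have "S *\<^sub>v a \<in> carrier_vec p" "S *\<^sub>v b \<in> carrier_vec p" using S a b by auto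
  then have "a \<bullet> (K *\<^sub>v a) = \<alpha> * (a \<bullet> (S *\<^sub>v a)) - \<beta> * (a \<bullet> (S *\<^sub>v b))"
    "b \<bullet> (K *\<^sub>v b) = \<beta> * (b \<bullet> (S *\<^sub>v a)) + \<alpha> * (b \<bullet> (S *\<^sub>v b))"
    "a \<bullet> (K *\<^sub>v b) = \<beta> * (a \<bullet> (S *\<^sub>v a)) + \<alpha> * (a \<bullet> (S *\<^sub>v b))"
    "b \<bullet> (K *\<^sub>v a) = \<alpha> * (b \<bullet> (S *\<^sub>v a)) - \<beta> * (b \<bullet> (S *\<^sub>v b))"
    unfolding Ka Kb using a b by (simp_all add: scalar_prod_add_distrib[of _ p])
  moreover have "b \<bullet> (S *\<^sub>v a) = a \<bullet> (S *\<^sub>v b)" by (rule sym_form_commute[OF S b a])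
  ultimately show "a \<bullet> (K *\<^sub>v a) + b \<bullet> (K *\<^sub>v b) = \<alpha> * (a \<bullet> (S *\<^sub>v a) + b \<bullet> (S *\<^sub>v b))"
    and "a \<bullet> (K *\<^sub>v b) - b \<bullet> (K *\<^sub>v a) = \<beta> * (a \<bullet> (S *\<^sub>v a) + b \<bullet> (S *\<^sub>v b))"
    by (simp_all add: algebra_simps)
qed

lemma lyapunov_output_generalized_eigenvalue_le_1:
  fixes A Sx B C D Sy :: "real mat"
  assumes A: "A \<in> carrier_mat n n" and Sx: "Sx \<in> carrier_mat n n" and B: "B \<in> carrier_mat n m"
    and C: "C \<in> carrier_mat p n" and D: "D \<in> carrier_mat p q"
    and Sx_sym: "Sx\<^sup>T = Sx" and Sx_psd: "\<And>z. z \<in> carrier_vec n \<Longrightarrow> 0 \<le> z \<bullet> (Sx *\<^sub>v z)"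
    and lyap: "Sx = A * Sx * A\<^sup>T + B * B\<^sup>T"
    and Sy: "Sy = C * Sx * C\<^sup>T + D * D\<^sup>T" "Sy\<^sup>T = Sy"
    and a: "a \<in> carrier_vec p" and b: "b \<in> carrier_vec p"
    and s_pos: "0 < a \<bullet> (Sy *\<^sub>v a) + b \<bullet> (Sy *\<^sub>v b)"
    and Ka: "(C * A * Sx * C\<^sup>T) *\<^sub>v a = \<alpha> \<cdot>\<^sub>v (Sy *\<^sub>v a) + (- \<beta>) \<cdot>\<^sub>v (Sy *\<^sub>v b)"
    and Kb: "(C * A * Sx * C\<^sup>T) *\<^sub>v b = \<beta> \<cdot>\<^sub>v (Sy *\<^sub>v a) + \<alpha> \<cdot>\<^sub>v (Sy *\<^sub>v b)"
  shows "\<alpha>\<^sup>2 + \<beta>\<^sup>2 \<le> 1"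
proof -
  define f where "f x y = x \<bullet> (Sx *\<^sub>v y)" for x y
  define s where "s = a \<bullet> (Sy *\<^sub>v a) + b \<bullet> (Sy *\<^sub>v b)"
  define z1 where "z1 = C\<^sup>T *\<^sub>v a"
  define z2 where "z2 = C\<^sup>T *\<^sub>v b"
  define p1 where "p1 = A\<^sup>T *\<^sub>v z1"
  define p2 where "p2 = A\<^sup>T *\<^sub>v z2"
  have z: "z1 \<in> carrier_vec n" "z2 \<in> carrier_vec n" unfolding z1_def z2_def using C a b by auto
  have p: "p1 \<in> carrier_vec n" "p2 \<in> carrier_vec n" unfolding p1_def p2_def using A z by auto
  have K: "C * A * Sx * C\<^sup>T \<in> carrier_mat p p" and SyC: "Sy \<in> carrier_mat p p"
    unfolding Sy using C A Sx D by auto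
  have re: "f p1 z1 + f p2 z2 = \<alpha> * s" and im: "f p1 z2 - f p2 z1 = \<beta> * s"
    using sym_form_generalized_eigenpair[OF K SyC Sy(2) a b Ka Kb]
    unfolding congruence_form_mult[OF A Sx C a a] congruence_form_mult[OF A Sx C b b]
      congruence_form_mult[OF A Sx C a b] congruence_form_mult[OF A Sx C b a]
      f_def p1_def p2_def z1_def z2_def s_def .
  have "f p1 p1 \<le> f z1 z1" "f p2 p2 \<le> f z2 z2"
    using lyapunov_form_step[OF A Sx B lyap z(1) z(1)] lyapunov_form_step[OF A Sx B lyap z(2) z(2)]
      scalar_prod_self_nonneg[of "B\<^sup>T *\<^sub>v z1"] scalar_prod_self_nonneg[of "B\<^sup>T *\<^sub>v z2"]
    unfolding f_def p1_def p2_def by linarith+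
  moreover have "f z1 z1 + f z2 z2 \<le> s"
    using congruence_gram_form[OF Sx C D a a] congruence_gram_form[OF Sx C D b b]
      scalar_prod_self_nonneg[of "D\<^sup>T *\<^sub>v a"] scalar_prod_self_nonneg[of "D\<^sup>T *\<^sub>v b"]
    unfolding f_def z1_def z2_def s_def Sy(1) by linarith
  moreover have "0 \<le> f p1 p1 + f p2 p2"
    using Sx_psd p unfolding f_def by (simp add: add_nonneg_nonneg)
  ultimately have "(f p1 p1 + f p2 p2) * (f z1 z1 + f z2 z2) \<le> s * s"
    by (intro mult_mono) auto
  moreover have "(\<alpha> * s)\<^sup>2 + (\<beta> * s)\<^sup>2 \<le> (f p1 p1 + f p2 p2) * (f z1 z1 + f z2 z2)"
    using sym_psd_form_cauchy_schwarz_pair[OF Sx Sx_sym Sx_psd p z] unfolding re[symmetric] im[symmetric] f_def .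
  ultimately have "(\<alpha>\<^sup>2 + \<beta>\<^sup>2) * s\<^sup>2 \<le> 1 * s\<^sup>2"
    by (simp add: algebra_simps power2_eq_square)
  then show ?thesis
    using s_pos unfolding s_def by (simp add: mult_le_cancel_right)
qed

lemma of_real_mat_mult_vec_Re_Im:
  fixes M :: "real mat" and v :: "complex vec"
  assumes "M \<in> carrier_mat n m" and "v \<in> carrier_vec m"
  shows "map_vec Re (map_mat complex_of_real M *\<^sub>v v) = M *\<^sub>v map_vec Re v"
    and "map_vec Im (map_mat complex_of_real M *\<^sub>v v) = M *\<^sub>v map_vec Im v"
  using assms by (auto intro!: eq_vecI simp: scalar_prod_def Re_sum Im_sum)

(* a + i b is a complex eigenvector of M for the eigenvalue alpha + i beta. *)
lemma rho_le_1I: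
  fixes M :: "real mat"
  assumes M: "M \<in> carrier_mat n n" and n: "0 < n"
    and bound: "\<And>a b \<alpha> \<beta>. a \<in> carrier_vec n \<Longrightarrow> b \<in> carrier_vec n \<Longrightarrow> a \<noteq> 0\<^sub>v n \<or> b \<noteq> 0\<^sub>v n \<Longrightarrow>
      M *\<^sub>v a = \<alpha> \<cdot>\<^sub>v a + (- \<beta>) \<cdot>\<^sub>v b \<Longrightarrow> M *\<^sub>v b = \<beta> \<cdot>\<^sub>v a + \<alpha> \<cdot>\<^sub>v b \<Longrightarrow> \<alpha>\<^sup>2 + \<beta>\<^sup>2 \<le> 1"
  shows "rho M \<le> 1"
proof -
  let ?Mc = "map_mat complex_of_real M"
  have Mc: "?Mc \<in> carrier_mat n n" using M by simp
  obtain l where "eigenvalue ?Mc l" and rho: "rho M = cmod l"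
    using spectral_radius_mem_max(1)[OF Mc n] unfolding rho_def spectrum_def by auto
  then obtain v where v: "v \<in> carrier_vec n" "v \<noteq> 0\<^sub>v n" "?Mc *\<^sub>v v = l \<cdot>\<^sub>v v"
    using Mc unfolding eigenvalue_def eigenvector_def by auto
  define a where "a = map_vec Re v"
  define b where "b = map_vec Im v"
  have ab: "a \<in> carrier_vec n" "b \<in> carrier_vec n" using v(1) unfolding a_def b_def by auto
  have "a \<noteq> 0\<^sub>v n \<or> b \<noteq> 0\<^sub>v n"
    using v(1,2) unfolding a_def b_def by (auto simp: vec_eq_iff complex_eq_iff)
  moreover have "M *\<^sub>v a = Re l \<cdot>\<^sub>v a + (- Im l) \<cdot>\<^sub>v b" "M *\<^sub>v b = Im l \<cdot>\<^sub>v a + Re l \<cdot>\<^sub>v b"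
    using arg_cong[OF v(3), of "map_vec Re"] arg_cong[OF v(3), of "map_vec Im"]
    unfolding of_real_mat_mult_vec_Re_Im[OF M v(1)] a_def b_def by (auto intro!: eq_vecI)
  ultimately have "(cmod l)\<^sup>2 \<le> 1"
    using bound[OF ab] by (simp add: cmod_power2)
  then show ?thesis
    unfolding rho by (simp add: power_le_one_iff abs_square_le_1)
qed

lemma rho_mult_inverse_le_1I:
  fixes K S Sinv :: "real mat"
  assumes K: "K \<in> carrier_mat n n" and S: "S \<in> carrier_mat n n" and Sinv: "Sinv \<in> carrier_mat n n"
    and inv: "S * Sinv = 1\<^sub>m n" and n: "0 < n"
    and bound: "\<And>a b \<alpha> \<beta>. a \<in> carrier_vec n \<Longrightarrow> b \<in> carrier_vec n \<Longrightarrow> a \<noteq> 0\<^sub>v n \<or> b \<noteq> 0\<^sub>v n \<Longrightarrow>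
      K *\<^sub>v a = \<alpha> \<cdot>\<^sub>v (S *\<^sub>v a) + (- \<beta>) \<cdot>\<^sub>v (S *\<^sub>v b) \<Longrightarrow>
      K *\<^sub>v b = \<beta> \<cdot>\<^sub>v (S *\<^sub>v a) + \<alpha> \<cdot>\<^sub>v (S *\<^sub>v b) \<Longrightarrow> \<alpha>\<^sup>2 + \<beta>\<^sup>2 \<le> 1"
  shows "rho (K * Sinv) \<le> 1"
proof (rule rho_le_1I[OF _ n])
  fix a' b' \<alpha> \<beta> assume a': "a' \<in> carrier_vec n" and b': "b' \<in> carrier_vec n"
    and nz: "a' \<noteq> 0\<^sub>v n \<or> b' \<noteq> 0\<^sub>v n"
    and Ma: "(K * Sinv) *\<^sub>v a' = \<alpha> \<cdot>\<^sub>v a' + (- \<beta>) \<cdot>\<^sub>v b'"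
    and Mb: "(K * Sinv) *\<^sub>v b' = \<beta> \<cdot>\<^sub>v a' + \<alpha> \<cdot>\<^sub>v b'"
  define a where "a = Sinv *\<^sub>v a'"
  define b where "b = Sinv *\<^sub>v b'"
  have ab: "a \<in> carrier_vec n" "b \<in> carrier_vec n" using Sinv a' b' unfolding a_def b_def by auto
  have S_ab: "S *\<^sub>v a = a'" "S *\<^sub>v b = b'"
    unfolding a_def b_def using assoc_mult_mat_vec[OF S Sinv] inv a' b' by auto
  have "K *\<^sub>v a = (K * Sinv) *\<^sub>v a'" "K *\<^sub>v b = (K * Sinv) *\<^sub>v b'"
    unfolding a_def b_def using K Sinv a' b' by auto
  then have "K *\<^sub>v a = \<alpha> \<cdot>\<^sub>v (S *\<^sub>v a) + (- \<beta>) \<cdot>\<^sub>v (S *\<^sub>v b)"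
    "K *\<^sub>v b = \<beta> \<cdot>\<^sub>v (S *\<^sub>v a) + \<alpha> \<cdot>\<^sub>v (S *\<^sub>v b)"
    unfolding S_ab Ma Mb by simp_all
  moreover have "a \<noteq> 0\<^sub>v n \<or> b \<noteq> 0\<^sub>v n"
    using nz S unfolding S_ab[symmetric] by auto
  ultimately show "\<alpha>\<^sup>2 + \<beta>\<^sup>2 \<le> 1"
    using bound[OF ab] by blast
qed (use K Sinv in simp)

lemma pos_def_pair_form_pos:
  assumes P: "pos_def P" "P \<in> carrier_mat n n" and a: "a \<in> carrier_vec n" and b: "b \<in> carrier_vec n"
    and nz: "a \<noteq> 0\<^sub>v n \<or> b \<noteq> 0\<^sub>v n"
  shows "0 < a \<bullet> (P *\<^sub>v a) + b \<bullet> (P *\<^sub>v b)"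
proof -
  have pos: "v \<noteq> 0\<^sub>v n \<Longrightarrow> 0 < v \<bullet> (P *\<^sub>v v)" if "v \<in> carrier_vec n" for v
    using P that unfolding pos_def_def by auto
  have "0 \<le> v \<bullet> (P *\<^sub>v v)" if "v \<in> carrier_vec n" for v
    using pos[OF that] P(2) that by (cases "v = 0\<^sub>v n") auto
  then show ?thesis
    using nz pos a b by (meson add_pos_nonneg add_nonneg_pos)
qed

theorem lemma5:
  fixes dx dy :: nat
    and A Bw Sx :: "real mat" and C :: "real mat" and Dv Sy Syinv :: "real mat"
  assumes "0 < dx" and "0 < dy"
    and "A \<in> carrier_mat dx dx" and "Bw \<in> carrier_mat dx dx"
    and "C \<in> carrier_mat dy dx" and "Dv \<in> carrier_mat dy dy"
    and "rho A < 1"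
    and "pos_def (Dv * Dv\<^sup>T)"
    and "Sx \<in> carrier_mat dx dx"
    and "Sx = A * Sx * A\<^sup>T + Bw * Bw\<^sup>T"
    and "Sy = C * Sx * C\<^sup>T + Dv * Dv\<^sup>T"
    and "pos_def Sy"
    and "Syinv \<in> carrier_mat dy dy" and "Sy * Syinv = 1\<^sub>m dy"
  shows "rho (C * A * Sx * C\<^sup>T * Syinv) \<le> 1"
proof -
  note A = assms(3) and B = assms(4) and C = assms(5) and D = assms(6) and rho_A = assms(7)
    and Sx = assms(9) and lyap = assms(10) and Sy = assms(11) and Sy_pd = assms(12)
  have Sx_sym: "Sx\<^sup>T = Sx"
    using rho_lt_1_pow_tendsto_0[OF A rho_A] by (rule lyapunov_solution_symmetric[OF A Sx B _ lyap])
  have Sx_psd: "0 \<le> z \<bullet> (Sx *\<^sub>v z)" if "z \<in> carrier_vec dx" for z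
    using rho_lt_1_pow_tendsto_0[OF A rho_A] by (rule lyapunov_solution_psd[OF A Sx B _ lyap that])
  have Sy_car: "Sy \<in> carrier_mat dy dy" using Sy C Sx D by auto
  have Sy_sym: "Sy\<^sup>T = Sy" using Sy_pd unfolding pos_def_def by simp
  show ?thesis
  proof (rule rho_mult_inverse_le_1I[OF _ Sy_car assms(13,14,2)])
    fix a b \<alpha> \<beta>
    assume "a \<in> carrier_vec dy" "b \<in> carrier_vec dy" "a \<noteq> 0\<^sub>v dy \<or> b \<noteq> 0\<^sub>v dy"
      "(C * A * Sx * C\<^sup>T) *\<^sub>v a = \<alpha> \<cdot>\<^sub>v (Sy *\<^sub>v a) + (- \<beta>) \<cdot>\<^sub>v (Sy *\<^sub>v b)"
      "(C * A * Sx * C\<^sup>T) *\<^sub>v b = \<beta> \<cdot>\<^sub>v (Sy *\<^sub>v a) + \<alpha> \<cdot>\<^sub>v (Sy *\<^sub>v b)"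
    then show "\<alpha>\<^sup>2 + \<beta>\<^sup>2 \<le> 1"
      using lyapunov_output_generalized_eigenvalue_le_1[OF A Sx B C D Sx_sym Sx_psd lyap Sy Sy_sym]
        pos_def_pair_form_pos[OF Sy_pd Sy_car]
      by blast
  qed (use A C Sx in auto)
qed

end
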